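(* Let $r\ge 2$ and let $S$ be a general position set of the glued binary tree $GT(r)$. If $|S\cap V_r^{(1)}|\ge 2$, then to each vertex $v\in S\cap V_r^{(1)}$ one can assign a pair of quasi-leaves belonging to $T_v$ and not belonging to $S$, in such a way that the pairs assigned to distinct vertices of $S\cap V_r^{(1)}$ are pairwise disjoint.
   Context: A perfect binary tree of depth $r\ge1$ is a rooted tree in which every non-leaf vertex has exactly $2$ children and all leaves have depth $r$. The glued binary tree $GT(r)$ is obtained from two copies $T_r^{(1)}$ and $T_r^{(2)}$ of the perfect binary tree of depth $r$ by pairwise identifying their leaves (via a fixed isomorphism of the copies). The identified vertices are the quasi-leaves; $L(GT(r))=V(T_r^{(1)})\cap V(T_r^{(2)})$, and $V_r^{(i)}=V(T_r^{(i)})\setminus L(GT(r))$ for $i\in\{1,2\}$. For $u\in V_r^{(1)}$, $T_u$ denotes the subtree of $T_r^{(1)}$ rooted at $u$ consisting of $u$ and all its descendants (its leaves being the quasi-leaves below $u$). For $S\subseteq V(G)$, two vertices $u,v$ are $S$-positionable if every shortest $u,v$-path $P$ satisfies $V(P)\cap S\subseteq\{u,v\}$; $S$ is a general position set if every two vertices of $S$ are $S$-positionable. *)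

theory Defs
  imports Main "HOL-Library.Sublist"
begin

definition walk :: "('a \<Rightarrow> 'a \<Rightarrow> bool) \<Rightarrow> 'a list \<Rightarrow> bool" where
  "walk adj p \<longleftrightarrow> p \<noteq> [] \<and> (\<forall>i. Suc i < length p \<longrightarrow> adj (p ! i) (p ! Suc i))"

text \<open>A shortest u,v-path: a walk from u to v of minimum number of vertices
  (a minimum-length walk is automatically a path).\<close>
definition shortest_path :: "('a \<Rightarrow> 'a \<Rightarrow> bool) \<Rightarrow> 'a \<Rightarrow> 'a \<Rightarrow> 'a list \<Rightarrow> bool" where
  "shortest_path adj u v p \<longleftrightarrow> walk adj p \<and> hd p = u \<and> last p = v \<and>
     (\<forall>q. walk adj q \<and> hd q = u \<and> last q = v \<longrightarrow> length p \<le> length q)"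

definition positionable :: "('a \<Rightarrow> 'a \<Rightarrow> bool) \<Rightarrow> 'a set \<Rightarrow> 'a \<Rightarrow> 'a \<Rightarrow> bool" where
  "positionable adj S u v \<longleftrightarrow> (\<forall>p. shortest_path adj u v p \<longrightarrow> set p \<inter> S \<subseteq> {u, v})"

definition general_position :: "'a set \<Rightarrow> ('a \<Rightarrow> 'a \<Rightarrow> bool) \<Rightarrow> 'a set \<Rightarrow> bool" where
  "general_position V adj S \<longleftrightarrow> S \<subseteq> V \<and> (\<forall>u\<in>S. \<forall>v\<in>S. positionable adj S u v)"

text \<open>Vertices of the perfect binary tree of depth r are binary words of length \<le> r
  (the root is the empty word, the children of w are w@[False], w@[True]).
  T1 w / T2 w are the non-leaf vertices of the two copies (length w < r);
  QL w are the quasi-leaves (length w = r), identified via the identity labelling.\<close>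
datatype gvert = T1 "bool list" | T2 "bool list" | QL "bool list"

definition emb1 :: "nat \<Rightarrow> bool list \<Rightarrow> gvert" where
  "emb1 r w = (if length w = r then QL w else T1 w)"

definition emb2 :: "nat \<Rightarrow> bool list \<Rightarrow> gvert" where
  "emb2 r w = (if length w = r then QL w else T2 w)"

definition GT_verts :: "nat \<Rightarrow> gvert set" where
  "GT_verts r = {T1 w | w. length w < r} \<union> {T2 w | w. length w < r} \<union> {QL w | w. length w = r}"

definition GT_adj :: "nat \<Rightarrow> gvert \<Rightarrow> gvert \<Rightarrow> bool" where
  "GT_adj r x y \<longleftrightarrow> (\<exists>w b. length w < r \<and>
      ({x, y} = {emb1 r w, emb1 r (w @ [b])} \<or> {x, y} = {emb2 r w, emb2 r (w @ [b])}))"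

definition quasi_leaves :: "nat \<Rightarrow> gvert set" where
  "quasi_leaves r = {QL w | w. length w = r}"

definition V1 :: "nat \<Rightarrow> gvert set" where
  "V1 r = {T1 w | w. length w < r}"

definition V2 :: "nat \<Rightarrow> gvert set" where
  "V2 r = {T2 w | w. length w < r}"

fun subtree_leaves :: "nat \<Rightarrow> gvert \<Rightarrow> gvert set" where
  "subtree_leaves r (T1 w) = {QL x | x. length x = r \<and> prefix w x}"
| "subtree_leaves r _ = {}"

end

theory Submission
  imports Defs
begin

text \<open>
  Every vertex of GT(r) carries a binary word; the vertices of the first copy are the words
  of length at most r, the root being the empty word. Along an edge the tree distance from
  this word to a fixed word changes by at most one, so the path in the first copy that climbs from a up to the longest common
  prefix of a and c and then descends to c is a shortest path. Hence no vertex of a general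
  position set S lies strictly inside such a path.

  Let w be in S \<inter> V1. Two children of w cannot both have vertices of S \<inter> V1 below them,
  since w lies between such vertices. So there is a vertex v, equal to w or a child of w,
  with no vertex of S \<inter> V1 other than w in T_v. Take another vertex a of S \<inter> V1. Then w lies
  on the path from a to any quasi-leaf below v, so these quasi-leaves avoid S. We assign
  to w one quasi-leaf below each child of v. The subtrees T_v chosen for distinct vertices
  of S \<inter> V1 are disjoint, because v is at most one level below w and T_v contains no vertex
  of S \<inter> V1 other than w.
\<close>

abbreviation lcp :: "'a list \<Rightarrow> 'a list \<Rightarrow> 'a list" where
  "lcp \<equiv> longest_common_prefix"

lemma lcp_commute: "lcp xs ys = lcp ys xs"
  by (induction xs ys rule: longest_common_prefix.induct) auto

lemma lcp_self [simp]: "lcp xs xs = xs"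
  by (induction xs) auto

lemma lcp_append_same: "lcp (ws @ xs) (ws @ ys) = ws @ lcp xs ys"
  by (induction ws) auto

lemma lcp_snoc:
  "lcp z (y @ [b]) = (if prefix (y @ [b]) z then y @ [b] else lcp z y)"
proof (induction y arbitrary: z)
  case Nil
  then show ?case by (cases z) auto
next
  case (Cons x y)
  then show ?case by (cases z) auto
qed

lemma length_lcp_le: "length (lcp xs ys) \<le> length xs" "length (lcp xs ys) \<le> length ys"
  by (simp_all add: prefix_length_le longest_common_prefix_prefix1 longest_common_prefix_prefix2)

lemma take_length_lcp:
  "take (length (lcp xs ys)) xs = lcp xs ys" "take (length (lcp xs ys)) ys = lcp xs ys"
  by (metis append_eq_conv_conj longest_common_prefix_prefix1 longest_common_prefix_prefix2 prefixE)+

lemma walk_iff_successively: "walk adj p \<longleftrightarrow> p \<noteq> [] \<and> successively adj p"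
  by (simp add: walk_def successively_conv_nth)

lemma walk_Cons_Cons: "walk adj (x # y # p) \<longleftrightarrow> adj x y \<and> walk adj (y # p)"
  by (simp add: walk_iff_successively)

lemma walk_rev:
  assumes "\<And>x y. adj x y \<Longrightarrow> adj y x" and "walk adj p"
  shows "walk adj (rev p)"
  using assms by (auto simp: walk_iff_successively intro: successively_mono)

lemma walk_join:
  assumes "walk adj p" and "walk adj q" and "last p = hd q"
  shows "walk adj (p @ tl q)"
  using assms by (cases q) (auto simp: walk_iff_successively successively_append_iff successively_Cons)

fun label :: "gvert \<Rightarrow> bool list" where
  "label (T1 w) = w" | "label (T2 w) = w" | "label (QL w) = w"

lemma label_emb1 [simp]: "label (emb1 r w) = w"
  by (simp add: emb1_def)

lemma label_emb2 [simp]: "label (emb2 r w) = w"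
  by (simp add: emb2_def)

lemma GT_adj_sym: "GT_adj r x y \<Longrightarrow> GT_adj r y x"
  unfolding GT_adj_def by (metis insert_commute)

lemma GT_adj_label:
  "GT_adj r x y \<Longrightarrow> \<exists>b. label y = label x @ [b] \<or> label x = label y @ [b]"
  unfolding GT_adj_def by (auto simp: doubleton_eq_iff)

lemma GT_adj_emb1_snoc: "length w < r \<Longrightarrow> GT_adj r (emb1 r w) (emb1 r (w @ [b]))"
  unfolding GT_adj_def by blast

definition tree_dist :: "'a list \<Rightarrow> 'a list \<Rightarrow> nat" where
  "tree_dist xs ys = length xs + length ys - 2 * length (lcp xs ys)"

lemma tree_dist_commute: "tree_dist xs ys = tree_dist ys xs"
  by (simp add: tree_dist_def lcp_commute)

lemma tree_dist_self [simp]: "tree_dist xs xs = 0"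
  by (simp add: tree_dist_def)

lemma tree_dist_snoc:
  "tree_dist z (y @ [b]) = (if prefix (y @ [b]) z then tree_dist z y - 1 else Suc (tree_dist z y))"
proof -
  have "lcp z y = y" if "prefix (y @ [b]) z"
    using that longest_common_prefix_max_prefix[of y z y] longest_common_prefix_prefix2[of z y]
    by (metis prefix_order.antisym prefix_order.refl prefix_snocD prefix_order.less_imp_le)
  then show ?thesis
    using length_lcp_le[of z y] by (auto simp: tree_dist_def lcp_snoc dest: prefix_length_le)
qed

lemma tree_dist_GT_adj: "GT_adj r x y \<Longrightarrow> tree_dist z (label x) \<le> Suc (tree_dist z (label y))"
  by (auto simp: tree_dist_snoc dest!: GT_adj_label)

lemma walk_length_gt_tree_dist:
  assumes "walk (GT_adj r) p"
  shows "tree_dist (label (hd p)) (label (last p)) < length p"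
proof -
  have "tree_dist z (label (hd p)) < tree_dist z (label (last p)) + length p"
    if "walk (GT_adj r) p" for z
    using that
  proof (induction p)
    case (Cons x p)
    show ?case
    proof (cases p)
      case (Cons y p')
      with Cons.prems have "GT_adj r x y" "walk (GT_adj r) p"
        by (simp_all add: walk_Cons_Cons)
      with Cons.IH tree_dist_GT_adj[of r x y z] show ?thesis
        using \<open>p = y # p'\<close> by fastforce
    qed simp
  qed (simp add: walk_def)
  from this[OF assms, of "label (last p)"] show ?thesis
    by (simp add: tree_dist_commute)
qed

definition descent :: "nat \<Rightarrow> 'a list \<Rightarrow> 'a list list" where
  "descent l c = map (\<lambda>i. take i c) [l..<Suc (length c)]"

lemma length_descent [simp]: "length (descent l c) = Suc (length c) - l"
  by (simp add: descent_def del: upt_Suc)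

lemma descent_eq_Nil_iff [simp]: "descent l c = [] \<longleftrightarrow> length c < l"
  by (simp add: descent_def Suc_le_eq del: upt_Suc)

lemma hd_descent [simp]: "l \<le> length c \<Longrightarrow> hd (descent l c) = take l c"
  by (simp add: descent_def hd_map del: upt_Suc)

lemma last_descent [simp]: "l \<le> length c \<Longrightarrow> last (descent l c) = c"
  by (simp add: descent_def last_map del: upt_Suc)

lemma nth_descent [simp]: "i < length (descent l c) \<Longrightarrow> descent l c ! i = take (l + i) c"
  by (simp add: descent_def del: upt_Suc)

lemma set_descent: "set (descent l c) = {b. prefix b c \<and> l \<le> length b}"
proof (intro subset_antisym subsetI)
  fix b assume "b \<in> {b. prefix b c \<and> l \<le> length b}"
  then have "b = take (length b) c" "l \<le> length b" "length b \<le> length c"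
    by (auto simp: prefix_def)
  then show "b \<in> set (descent l c)"
    unfolding descent_def set_map set_upt
    by (metis atLeastLessThanSuc_atLeastAtMost atLeastAtMost_iff imageI)
qed (auto simp: descent_def take_is_prefix simp del: upt_Suc)

lemma walk_descent:
  assumes "l \<le> length c" and "length c \<le> r"
  shows "walk (GT_adj r) (map (emb1 r) (descent l c))"
  unfolding walk_iff_successively successively_conv_nth
proof (intro conjI allI impI)
  show "map (emb1 r) (descent l c) \<noteq> []"
    using assms(1) by simp
next
  fix i assume "Suc i < length (map (emb1 r) (descent l c))"
  then have i: "Suc i < length (descent l c)" by simp
  then have "GT_adj r (emb1 r (take (l + i) c)) (emb1 r (take (l + i) c @ [c ! (l + i)]))"
    using assms by (intro GT_adj_emb1_snoc) simp
  with i show "GT_adj r (map (emb1 r) (descent l c) ! i) (map (emb1 r) (descent l c) ! Suc i)"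
    by (simp add: take_Suc_conv_app_nth)
qed

definition tree_path :: "'a list \<Rightarrow> 'a list \<Rightarrow> 'a list list" where
  "tree_path a c = (let l = length (lcp a c) in rev (descent l a) @ tl (descent l c))"

lemma shortest_path_tree_path:
  assumes "length a \<le> r" and "length c \<le> r"
  shows "shortest_path (GT_adj r) (emb1 r a) (emb1 r c) (map (emb1 r) (tree_path a c))"
proof -
  define l where "l = length (lcp a c)"
  have la: "l \<le> length a" and lc: "l \<le> length c" and meet: "take l a = take l c"
    unfolding l_def by (simp_all add: length_lcp_le take_length_lcp)
  define up where "up = rev (map (emb1 r) (descent l a))"
  define down where "down = map (emb1 r) (descent l c)"
  have up: "up \<noteq> []" "hd up = emb1 r a" "last up = emb1 r (take l a)" "length up = Suc (length a) - l"
    using la by (auto simp: up_def hd_rev last_rev hd_map last_map)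
  have down: "down \<noteq> []" "hd down = emb1 r (take l c)" "last down = emb1 r c"
    "length down = Suc (length c) - l"
    using lc by (auto simp: down_def hd_map last_map)
  have "walk (GT_adj r) up"
    unfolding up_def using GT_adj_sym walk_descent[OF la assms(1)] by (rule walk_rev)
  moreover have "walk (GT_adj r) down"
    unfolding down_def using walk_descent[OF lc assms(2)] .
  ultimately have "walk (GT_adj r) (up @ tl down)"
    using up(3) down(2) meet by (intro walk_join) simp_all
  moreover have "hd (up @ tl down) = emb1 r a"
    using up by simp
  moreover have "last (up @ tl down) = emb1 r c"
    using up(3) down(1-3) meet by (cases down) (auto simp: last_append)
  moreover have "length (up @ tl down) = Suc (tree_dist a c)"
    using la lc up(4) down(4) by (simp add: tree_dist_def l_def)
  moreover have "Suc (tree_dist a c) \<le> length q"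
    if "walk (GT_adj r) q" "hd q = emb1 r a" "last q = emb1 r c" for q
    using walk_length_gt_tree_dist[OF that(1)] that(2,3) by simp
  moreover have "map (emb1 r) (tree_path a c) = up @ tl down"
    by (simp add: tree_path_def l_def up_def down_def map_tl Let_def rev_map)
  ultimately show ?thesis
    unfolding shortest_path_def by metis
qed

lemma prefix_in_tree_path:
  assumes "prefix (lcp a c) b" and "prefix b c"
  shows "b \<in> set (tree_path a c)"
proof -
  define l where "l = length (lcp a c)"
  have la: "l \<le> length a" and lc: "l \<le> length c" and meet: "take l a = take l c"
    unfolding l_def by (simp_all add: length_lcp_le take_length_lcp)
  have "hd (descent l c) \<in> set (descent l a)"
    using la lc meet take_is_prefix[of l a] by (simp add: set_descent)
  then have "set (descent l c) \<subseteq> set (tree_path a c)"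
    using lc by (cases "descent l c") (auto simp: tree_path_def l_def[symmetric])
  moreover have "b \<in> set (descent l c)"
    using assms by (auto simp: set_descent l_def dest: prefix_length_le)
  ultimately show ?thesis
    by blast
qed

lemma general_position_between:
  assumes "general_position (GT_verts r) (GT_adj r) S"
    and "emb1 r a \<in> S" and "emb1 r c \<in> S" and "emb1 r b \<in> S"
    and "length a \<le> r" and "length c \<le> r"
    and "prefix (lcp a c) b" and "prefix b c"
  shows "b = a \<or> b = c"
proof -
  have "positionable (GT_adj r) S (emb1 r a) (emb1 r c)"
    using assms(1-3) by (simp add: general_position_def)
  then have "set (map (emb1 r) (tree_path a c)) \<inter> S \<subseteq> {emb1 r a, emb1 r c}"
    using shortest_path_tree_path[OF assms(5,6)] unfolding positionable_def by blast
  moreover have "emb1 r b \<in> set (map (emb1 r) (tree_path a c))"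
    using prefix_in_tree_path[OF assms(7,8)] by simp
  ultimately have "emb1 r b \<in> {emb1 r a, emb1 r c}"
    using assms(4) by blast
  then show ?thesis
    by (metis empty_iff insert_iff label_emb1)
qed

lemma general_position_T1_length:
  "general_position (GT_verts r) (GT_adj r) S \<Longrightarrow> T1 w \<in> S \<Longrightarrow> length w < r"
  by (auto simp: general_position_def GT_verts_def)

lemma general_position_free_child:
  assumes gp: "general_position (GT_verts r) (GT_adj r) S" and "T1 w \<in> S"
  shows "\<exists>b. \<forall>u. T1 u \<in> S \<longrightarrow> \<not> prefix (w @ [b]) u"
proof (rule ccontr)
  assume "\<not> ?thesis"
  then obtain u u' where u: "T1 u \<in> S" "prefix (w @ [False]) u"
    and u': "T1 u' \<in> S" "prefix (w @ [True]) u'"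
    by blast
  have "lcp u u' = w"
    using u(2) u'(2) by (auto simp: prefix_def lcp_append_same)
  moreover have "length u < r" "length u' < r" "length w < r"
    using general_position_T1_length[OF gp] u u' \<open>T1 w \<in> S\<close> by auto
  ultimately have "w = u \<or> w = u'"
    using general_position_between[OF gp, of u u' w] u u' \<open>T1 w \<in> S\<close>
    by (simp add: emb1_def prefix_snocD prefix_order.less_imp_le)
  with u(2) u'(2) show False
    by (auto dest: prefix_length_le)
qed

definition exclusive_root :: "nat \<Rightarrow> gvert set \<Rightarrow> bool list \<Rightarrow> bool list \<Rightarrow> bool" where
  "exclusive_root r S w v \<longleftrightarrow> prefix w v \<and> length v \<le> Suc (length w) \<and> length v < r \<and>
     (\<forall>u. T1 u \<in> S \<longrightarrow> prefix v u \<longrightarrow> u = w)"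

lemma exclusive_root_exists:
  assumes gp: "general_position (GT_verts r) (GT_adj r) S" and w: "T1 w \<in> S"
  shows "\<exists>v. exclusive_root r S w v"
proof (cases "\<exists>u. T1 u \<in> S \<and> strict_prefix w u")
  case True
  then obtain u where u: "T1 u \<in> S" "strict_prefix w u"
    by blast
  obtain b where b: "\<forall>u. T1 u \<in> S \<longrightarrow> \<not> prefix (w @ [b]) u"
    using general_position_free_child[OF gp w] by blast
  have "length w < length u" "length u < r"
    using prefix_length_less[OF u(2)] general_position_T1_length[OF gp u(1)] .
  then have "exclusive_root r S w (w @ [b])"
    using b by (simp add: exclusive_root_def)
  then show ?thesis ..
next
  case False
  then have "exclusive_root r S w w"
    using general_position_T1_length[OF gp w] by (auto simp: exclusive_root_def)
  then show ?thesis ..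
qed

lemma exclusive_root_leaves:
  assumes gp: "general_position (GT_verts r) (GT_adj r) S"
    and root: "exclusive_root r S w v" and w: "T1 w \<in> S" and a: "T1 a \<in> S" "a \<noteq> w"
    and y: "length y = r" "prefix v y"
  shows "QL y \<in> subtree_leaves r (T1 w) - S"
proof -
  have wv: "prefix w v" "length v \<le> Suc (length w)"
    using root by (simp_all add: exclusive_root_def)
  have "prefix w y"
    using wv(1) y(2) by (rule prefix_order.trans)
  have "\<not> prefix v a"
    using root a by (auto simp: exclusive_root_def)
  then have "\<not> prefix v (lcp a y)"
    by (meson longest_common_prefix_prefix1 prefix_order.trans)
  then have "strict_prefix (lcp a y) v"
    using prefix_same_cases[OF longest_common_prefix_prefix2[of a y] y(2)] by auto
  then have "length (lcp a y) \<le> length w"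
    using prefix_length_less wv(2) by (metis less_Suc_eq_le order_less_le_trans)
  then have "prefix (lcp a y) w"
    using prefix_length_prefix[OF prefix_order.less_imp_le wv(1)] \<open>strict_prefix (lcp a y) v\<close>
    by blast
  moreover have "length a < r" "length w < r"
    using general_position_T1_length[OF gp] a w by auto
  ultimately have "QL y \<notin> S"
    using general_position_between[OF gp, of a y w] \<open>prefix w y\<close> a w y(1)
    by (auto simp: emb1_def)
  with \<open>prefix w y\<close> y(1) show ?thesis
    by simp
qed

lemma exclusive_roots_common_extension:
  assumes "exclusive_root r S w v" and "exclusive_root r S w' v'" and "T1 w \<in> S" and "T1 w' \<in> S"
    and "prefix v y" and "prefix v' y"
  shows "w = w'"
proof -
  have "w = w'" if root: "exclusive_root r S w v" "exclusive_root r S w' v'"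
    and "T1 w \<in> S" "T1 w' \<in> S" and "prefix v v'" for w v w' v'
  proof -
    have "prefix w' v'" "prefix w v'"
      using root \<open>prefix v v'\<close> by (auto simp: exclusive_root_def intro: prefix_order.trans)
    have "length v \<le> Suc (length w)" "length v' \<le> Suc (length w')"
      using root by (simp_all add: exclusive_root_def)
    then consider "length v \<le> length w'" | "length w' = length w" | "length v' \<le> length w"
      by linarith
    then show ?thesis
    proof cases
      case 1
      then have "prefix v w'"
        using \<open>prefix v v'\<close> \<open>prefix w' v'\<close> prefix_length_prefix by blast
      then show ?thesis
        using root(1) \<open>T1 w' \<in> S\<close> by (auto simp: exclusive_root_def)
    next
      case 2
      then show ?thesis
        using \<open>prefix w v'\<close> \<open>prefix w' v'\<close>
        by (metis order_refl prefix_length_prefix prefix_order.antisym)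
    next
      case 3
      then have "prefix v' w"
        using prefix_length_prefix[OF prefix_order.refl \<open>prefix w v'\<close>] by simp
      then show ?thesis
        using root(2) \<open>T1 w \<in> S\<close> by (auto simp: exclusive_root_def)
    qed
  qed
  then show ?thesis
    using prefix_same_cases[OF assms(5,6)] assms(1-4) by metis
qed

lemma exists_other_T1:
  assumes "card (S \<inter> V1 r) \<ge> 2"
  shows "\<exists>a. T1 a \<in> S \<and> a \<noteq> w"
proof (rule ccontr)
  assume "\<not> ?thesis"
  then have "S \<inter> V1 r \<subseteq> {T1 w}"
    by (auto simp: V1_def)
  then have "card (S \<inter> V1 r) \<le> 1"
    using card_mono[of "{T1 w}"] by fastforce
  with assms show False
    by simp
qed

definition leaf_pair :: "nat \<Rightarrow> bool list \<Rightarrow> gvert set" where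
  "leaf_pair r v =
     {QL (v @ False # replicate (r - Suc (length v)) False),
      QL (v @ True # replicate (r - Suc (length v)) False)}"

lemma card_leaf_pair: "card (leaf_pair r v) = 2"
  by (simp add: leaf_pair_def)

lemma leaf_pair_below:
  "length v < r \<Longrightarrow> x \<in> leaf_pair r v \<Longrightarrow> \<exists>y. x = QL y \<and> length y = r \<and> prefix v y"
  by (auto simp: leaf_pair_def)

lemma leaf_pair_subset_subtree_leaves:
  assumes gp: "general_position (GT_verts r) (GT_adj r) S"
    and root: "exclusive_root r S w v" and w: "T1 w \<in> S" and a: "T1 a \<in> S" "a \<noteq> w"
  shows "leaf_pair r v \<subseteq> subtree_leaves r (T1 w) - S"
proof
  fix x assume "x \<in> leaf_pair r v"
  moreover have "length v < r"
    using root by (simp add: exclusive_root_def)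
  ultimately obtain y where "x = QL y" "length y = r" "prefix v y"
    using leaf_pair_below by blast
  then show "x \<in> subtree_leaves r (T1 w) - S"
    using exclusive_root_leaves[OF assms] by simp
qed

lemma leaf_pairs_disjoint:
  assumes "exclusive_root r S w v" and "exclusive_root r S w' v'" and "T1 w \<in> S" and "T1 w' \<in> S"
    and "w \<noteq> w'"
  shows "leaf_pair r v \<inter> leaf_pair r v' = {}"
proof (rule ccontr)
  assume "leaf_pair r v \<inter> leaf_pair r v' \<noteq> {}"
  then obtain x where x: "x \<in> leaf_pair r v" "x \<in> leaf_pair r v'"
    by blast
  have "length v < r" "length v' < r"
    using assms(1,2) by (simp_all add: exclusive_root_def)
  with x obtain y y' where "x = QL y" "prefix v y" "x = QL y'" "prefix v' y'"
    using leaf_pair_below by meson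
  then have "prefix v y" "prefix v' y"
    by simp_all
  with exclusive_roots_common_extension[OF assms(1-4)] assms(5) show False
    by blast
qed

theorem mainTheorem6:
  fixes r :: nat and S :: "gvert set"
  assumes "r \<ge> 2"
    and "general_position (GT_verts r) (GT_adj r) S"
    and "card (S \<inter> V1 r) \<ge> 2"
  shows "\<exists>f :: gvert \<Rightarrow> gvert set.
           (\<forall>v \<in> S \<inter> V1 r. card (f v) = 2 \<and> f v \<subseteq> subtree_leaves r v - S) \<and>
           (\<forall>v \<in> S \<inter> V1 r. \<forall>v' \<in> S \<inter> V1 r. v \<noteq> v' \<longrightarrow> f v \<inter> f v' = {})"
proof -
  note gp = assms(2)
  obtain root where root: "\<And>w. T1 w \<in> S \<Longrightarrow> exclusive_root r S w (root w)"
    using exclusive_root_exists[OF gp] by metis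
  define f where "f x = (case x of T1 w \<Rightarrow> leaf_pair r (root w) | _ \<Rightarrow> {})" for x
  show ?thesis
  proof (intro exI conjI ballI impI)
    fix x assume "x \<in> S \<inter> V1 r"
    then obtain w where x: "x = T1 w" and w: "T1 w \<in> S"
      by (auto simp: V1_def)
    obtain a where a: "T1 a \<in> S" "a \<noteq> w"
      using exists_other_T1[OF assms(3)] by blast
    show "card (f x) = 2"
      by (simp add: f_def x card_leaf_pair)
    show "f x \<subseteq> subtree_leaves r x - S"
      using leaf_pair_subset_subtree_leaves[OF gp root[OF w] w a] by (simp add: f_def x)
  next
    fix x x' assume "x \<in> S \<inter> V1 r" "x' \<in> S \<inter> V1 r" "x \<noteq> x'"
    then obtain w w' where x: "x = T1 w" "T1 w \<in> S" and x': "x' = T1 w'" "T1 w' \<in> S"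
      and "w \<noteq> w'"
      by (auto simp: V1_def)
    then show "f x \<inter> f x' = {}"
      using leaf_pairs_disjoint[OF root[OF x(2)] root[OF x'(2)] x(2) x'(2)] by (simp add: f_def)
  qed
qed

end
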